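(* Let $G$ be a graph, let $D$ be a minimum dominating set of $G$ and $\gamma=|D|$, and let $\nabla$ be an integer with $\nabla>\nabla_1^B(G)$. Let $$\hat D=\{v\in V(G): \text{for all } A\subseteq D\setminus\{v\} \text{ with } N(v)\subseteq N[A] \text{ we have } |A|>2\nabla-1\}$$ and $$D_1=\{v\in V(G): \text{for all } A\subseteq V(G)\setminus\{v\} \text{ with } N(v)\subseteq N[A] \text{ we have } |A|>2\nabla-1\}.$$ Then $D_1\subseteq\hat D$ and $|D_1\setminus D|\le\rho(G)\cdot\gamma$.
   Context: Graphs are finite, undirected and simple. $N(v)$ is the open neighbourhood of $v$, $N[v]=N(v)\cup\{v\}$, and $N[A]=\bigcup_{a\in A}N[a]$. A dominating set is a set $D$ with $N[D]=V(G)$. A graph $H$ is a $1$-shallow minor of $G$ if it is obtained from $G$ by deleting vertices and edges and contracting pairwise vertex-disjoint connected subgraphs of radius at most $1$. $\nabla_1^B(G)$ is the maximum of $|E(H)|/|V(H)|$ over all bipartite $1$-shallow minors $H$ of $G$. The Hall ratio $\rho(G)$ is $\max\{|V(H)|/\alpha(H): H\subseteq G\}$, where $\alpha(H)$ is the size of a largest independent set of $H$. *)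

theory Defs
  imports Complex_Main
begin

definition graph :: "'a set \<Rightarrow> ('a \<Rightarrow> 'a \<Rightarrow> bool) \<Rightarrow> bool" where
  "graph V E \<longleftrightarrow> finite V \<and> (\<forall>x y. E x y \<longrightarrow> x \<in> V \<and> y \<in> V \<and> x \<noteq> y \<and> E y x)"

definition nbhd :: "'a set \<Rightarrow> ('a \<Rightarrow> 'a \<Rightarrow> bool) \<Rightarrow> 'a \<Rightarrow> 'a set" where
  "nbhd V E v = {u \<in> V. E v u}"

definition cnbhd :: "'a set \<Rightarrow> ('a \<Rightarrow> 'a \<Rightarrow> bool) \<Rightarrow> 'a \<Rightarrow> 'a set" where
  "cnbhd V E v = insert v (nbhd V E v)"

definition cnbhd_set :: "'a set \<Rightarrow> ('a \<Rightarrow> 'a \<Rightarrow> bool) \<Rightarrow> 'a set \<Rightarrow> 'a set" where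
  "cnbhd_set V E A = (\<Union>a\<in>A. cnbhd V E a)"

definition dominating :: "'a set \<Rightarrow> ('a \<Rightarrow> 'a \<Rightarrow> bool) \<Rightarrow> 'a set \<Rightarrow> bool" where
  "dominating V E D \<longleftrightarrow> D \<subseteq> V \<and> cnbhd_set V E D = V"

definition min_dominating :: "'a set \<Rightarrow> ('a \<Rightarrow> 'a \<Rightarrow> bool) \<Rightarrow> 'a set \<Rightarrow> bool" where
  "min_dominating V E D \<longleftrightarrow> dominating V E D \<and>
     (\<forall>D'. dominating V E D' \<longrightarrow> card D \<le> card D')"

definition num_edges :: "('a \<Rightarrow> 'a \<Rightarrow> bool) \<Rightarrow> nat" where
  "num_edges F = card {{u, v} | u v. F u v}"

definition bipartite :: "'a set \<Rightarrow> ('a \<Rightarrow> 'a \<Rightarrow> bool) \<Rightarrow> bool" where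
  "bipartite W F \<longleftrightarrow> (\<exists>X Y. X \<union> Y = W \<and> X \<inter> Y = {} \<and>
     (\<forall>x\<in>X. \<forall>x'\<in>X. \<not> F x x') \<and> (\<forall>y\<in>Y. \<forall>y'\<in>Y. \<not> F y y'))"

text \<open>Model of a 1-shallow minor (W,F) of (V,E): each vertex c of the minor is the centre of
  a branch set B c of radius at most 1 around c (so B c is connected, contained in N[c]);
  branch sets are pairwise disjoint; every edge of the minor is witnessed by an edge of G
  between the two branch sets. Vertices of the minor are named by the centres of their
  branch sets (every 1-shallow minor is isomorphic to one of this form).\<close>
definition shallow_minor1 ::
  "'a set \<Rightarrow> ('a \<Rightarrow> 'a \<Rightarrow> bool) \<Rightarrow> 'a set \<Rightarrow> ('a \<Rightarrow> 'a \<Rightarrow> bool) \<Rightarrow> bool" where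
  "shallow_minor1 V E W F \<longleftrightarrow> graph W F \<and> W \<subseteq> V \<and>
     (\<exists>B :: 'a \<Rightarrow> 'a set.
        (\<forall>c\<in>W. c \<in> B c \<and> B c \<subseteq> cnbhd V E c) \<and>
        (\<forall>c\<in>W. \<forall>d\<in>W. c \<noteq> d \<longrightarrow> B c \<inter> B d = {}) \<and>
        (\<forall>c d. F c d \<longrightarrow> (\<exists>x\<in>B c. \<exists>y\<in>B d. E x y)))"

text \<open>nabla_1^B(G): maximum edge density |E(H)|/|V(H)| over bipartite 1-shallow minors H
  (with at least one vertex; 0 if there are none).\<close>
definition nabla1B :: "'a set \<Rightarrow> ('a \<Rightarrow> 'a \<Rightarrow> bool) \<Rightarrow> real" where
  "nabla1B V E = Max (insert 0 {real (num_edges F) / real (card W) | W F.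
      shallow_minor1 V E W F \<and> bipartite W F \<and> W \<noteq> {}})"

definition independent :: "'a set \<Rightarrow> ('a \<Rightarrow> 'a \<Rightarrow> bool) \<Rightarrow> 'a set \<Rightarrow> bool" where
  "independent W F I \<longleftrightarrow> I \<subseteq> W \<and> (\<forall>x\<in>I. \<forall>y\<in>I. \<not> F x y)"

definition alpha :: "'a set \<Rightarrow> ('a \<Rightarrow> 'a \<Rightarrow> bool) \<Rightarrow> nat" where
  "alpha W F = Max {card I | I. independent W F I}"

definition subgraph :: "'a set \<Rightarrow> ('a \<Rightarrow> 'a \<Rightarrow> bool) \<Rightarrow> 'a set \<Rightarrow> ('a \<Rightarrow> 'a \<Rightarrow> bool) \<Rightarrow> bool" where
  "subgraph V E W F \<longleftrightarrow> graph W F \<and> W \<subseteq> V \<and> (\<forall>x y. F x y \<longrightarrow> E x y)"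

definition hall_ratio :: "'a set \<Rightarrow> ('a \<Rightarrow> 'a \<Rightarrow> bool) \<Rightarrow> real" where
  "hall_ratio V E = Max (insert 0 {real (card W) / real (alpha W F) | W F.
      subgraph V E W F \<and> W \<noteq> {}})"

end

theory Submission imports Defs begin

(* Let I be an independent set in D1 - D, so each N(v), v \<in> I, needs at least 2 nb
   dominators. Contracting every vertex outside I onto a dominator in D gives a
   bipartite 1-shallow minor on I \<union> D in which each v \<in> I is joined to the dominators of N(v),
   hence to at least 2 nb vertices. The density bound nabla1B < nb then yields
   2 nb |I| \<le> nb (|I| + |D|), i.e. |I| \<le> |D|. So the subgraph induced by D1 - D has
   independence number at most |D|, and the Hall ratio bounds |D1 - D| by rho |D|. *)

definition hard_to_dominate :: "'a set \<Rightarrow> ('a \<Rightarrow> 'a \<Rightarrow> bool) \<Rightarrow> 'a set \<Rightarrow> int \<Rightarrow> 'a set" where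
  "hard_to_dominate V E S k =
     {v \<in> V. \<forall>A. A \<subseteq> S - {v} \<and> nbhd V E v \<subseteq> cnbhd_set V E A \<longrightarrow> int (card A) > k}"

lemma hard_to_dominate_antimono:
  "S \<subseteq> S' \<Longrightarrow> hard_to_dominate V E S' k \<subseteq> hard_to_dominate V E S k"
  unfolding hard_to_dominate_def by blast

definition bipartite_link :: "'a set \<Rightarrow> ('a \<Rightarrow> 'a set) \<Rightarrow> 'a \<Rightarrow> 'a \<Rightarrow> bool" where
  "bipartite_link I N x y \<longleftrightarrow> (x \<in> I \<and> y \<in> N x) \<or> (y \<in> I \<and> x \<in> N y)"


lemma finite_relations_on:
  assumes "finite V"
  shows "finite {F :: 'a \<Rightarrow> 'a \<Rightarrow> bool. \<forall>x y. F x y \<longrightarrow> x \<in> V \<and> y \<in> V}"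
proof (rule finite_subset)
  show "{F :: 'a \<Rightarrow> 'a \<Rightarrow> bool. \<forall>x y. F x y \<longrightarrow> x \<in> V \<and> y \<in> V}
        \<subseteq> (\<lambda>S x y. (x, y) \<in> S) ` Pow (V \<times> V)"
    by (auto intro!: image_eqI[where x = "{(x, y). _ x y}"])
  show "finite ((\<lambda>S x y. (x, y) \<in> S) ` Pow (V \<times> V))"
    using assms by simp
qed

lemma finite_values_on_subrelations:
  assumes "finite V" and "\<And>W F. P W F \<Longrightarrow> W \<subseteq> V \<and> (\<forall>x y. F x y \<longrightarrow> x \<in> V \<and> y \<in> V)"
  shows "finite {f W F | W F. P W F}"
proof -
  have "{f W F | W F. P W F} \<subseteq> case_prod f ` (Pow V \<times> {F. \<forall>x y. F x y \<longrightarrow> x \<in> V \<and> y \<in> V})"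
    using assms(2) by fastforce
  then show ?thesis
    by (rule finite_subset) (simp add: assms(1) finite_relations_on)
qed

lemma finite_hall_ratio_values:
  "graph V E \<Longrightarrow> finite {real (card W) / real (alpha W F) | W F. subgraph V E W F \<and> W \<noteq> {}}"
  by (rule finite_values_on_subrelations) (auto simp: graph_def subgraph_def)

lemma finite_nabla1B_values:
  "graph V E \<Longrightarrow> finite {real (num_edges F) / real (card W) | W F.
      shallow_minor1 V E W F \<and> bipartite W F \<and> W \<noteq> {}}"
  by (rule finite_values_on_subrelations) (auto simp: graph_def shallow_minor1_def)


lemma nabla1B_nonneg: "graph V E \<Longrightarrow> 0 \<le> nabla1B V E"
  unfolding nabla1B_def using finite_nabla1B_values by (intro Max_ge) auto

lemma num_edges_le_nabla1B:
  assumes "graph V E" "shallow_minor1 V E W F" "bipartite W F"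
  shows "real (num_edges F) \<le> nabla1B V E * real (card W)"
proof (cases "W = {}")
  case True
  with assms(2) have "F = (\<lambda>x y. False)"
    by (auto simp: shallow_minor1_def graph_def)
  then show ?thesis by (simp add: num_edges_def True)
next
  case False
  have "finite W" using assms(2) by (simp add: shallow_minor1_def graph_def)
  with False have "0 < card W" by (simp add: card_gt_0_iff)
  moreover have "real (num_edges F) / real (card W) \<le> nabla1B V E"
    unfolding nabla1B_def using finite_nabla1B_values[OF assms(1)] assms False
    by (intro Max_ge) auto
  ultimately show ?thesis by (simp add: divide_le_eq)
qed

lemma num_edges_bipartite_link:
  assumes "finite I" "\<forall>v\<in>I. finite (N v)" "\<forall>v\<in>I. N v \<inter> I = {}"
  shows "num_edges (bipartite_link I N) = (\<Sum>v\<in>I. card (N v))"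
proof -
  have edges: "{{u, v} | u v. bipartite_link I N u v} = (\<lambda>(v, d). {v, d}) ` Sigma I N"
    by (auto simp: bipartite_link_def insert_commute)
  have "inj_on (\<lambda>(v, d). {v, d}) (Sigma I N)"
    using assms(3) by (fastforce simp: inj_on_def doubleton_eq_iff)
  then show ?thesis
    unfolding num_edges_def edges using assms(1,2) by (simp add: card_image card_SigmaI)
qed

lemma graph_bipartite_link:
  assumes "finite I" "finite D" "I \<inter> D = {}" "\<forall>v\<in>I. N v \<subseteq> D"
  shows "graph (I \<union> D) (bipartite_link I N)"
  using assms unfolding graph_def bipartite_link_def by blast

lemma bipartite_bipartite_link:
  assumes "I \<inter> D = {}" "\<forall>v\<in>I. N v \<subseteq> D"
  shows "bipartite (I \<union> D) (bipartite_link I N)"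
  unfolding bipartite_def
  by (rule exI[of _ I], rule exI[of _ D]) (use assms in \<open>auto simp: bipartite_link_def\<close>)


lemma dominating_obtains_dominator_map:
  assumes "dominating V E D"
  obtains g where "\<forall>u\<in>V. g u \<in> D \<and> u \<in> cnbhd V E (g u)" and "\<forall>d\<in>D. g d = d"
proof -
  have "\<forall>u\<in>V. \<exists>d\<in>D. u \<in> cnbhd V E d \<and> (u \<in> D \<longrightarrow> d = u)"
  proof
    fix u assume "u \<in> V"
    show "\<exists>d\<in>D. u \<in> cnbhd V E d \<and> (u \<in> D \<longrightarrow> d = u)"
    proof (cases "u \<in> D")
      case True
      then show ?thesis by (auto simp: cnbhd_def)
    next
      case False
      with \<open>u \<in> V\<close> assms show ?thesis by (auto simp: dominating_def cnbhd_set_def)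
    qed
  qed
  then obtain g where "\<forall>u\<in>V. g u \<in> D \<and> u \<in> cnbhd V E (g u) \<and> (u \<in> D \<longrightarrow> g u = u)"
    by metis
  moreover have "D \<subseteq> V" using assms by (simp add: dominating_def)
  ultimately show ?thesis using that by blast
qed

(* Since I is independent, every neighbour of v \<in> I lies in
   the branch set of its dominator. *)
lemma shallow_minor1_contract_onto_dominators:
  assumes G: "graph V E" and "D \<subseteq> V" "I \<subseteq> V - D" and indep: "\<forall>x\<in>I. \<forall>y\<in>I. \<not> E x y"
    and g: "\<forall>u\<in>V. g u \<in> D \<and> u \<in> cnbhd V E (g u)" "\<forall>d\<in>D. g d = d"
  shows "shallow_minor1 V E (I \<union> D) (bipartite_link I (\<lambda>v. g ` nbhd V E v))"
proof -
  define B where "B c = (if c \<in> D then {u \<in> V - I. g u = c} else {c})" for c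
  have fin: "finite I" "finite D"
    using G assms(2,3) by (auto simp: graph_def intro: rev_finite_subset)
  have "g ` nbhd V E v \<subseteq> D" for v using g(1) by (auto simp: nbhd_def)
  then have "graph (I \<union> D) (bipartite_link I (\<lambda>v. g ` nbhd V E v))"
    using fin assms(3) by (intro graph_bipartite_link) auto
  moreover have "\<forall>c\<in>I \<union> D. c \<in> B c \<and> B c \<subseteq> cnbhd V E c"
    using assms(2,3) g by (auto simp: B_def cnbhd_def)
  moreover have "\<forall>c\<in>I \<union> D. \<forall>d\<in>I \<union> D. c \<noteq> d \<longrightarrow> B c \<inter> B d = {}"
    by (auto simp: B_def)
  moreover have "\<exists>x\<in>B v. \<exists>y\<in>B (g u). E x y \<and> E y x" if "v \<in> I" "u \<in> nbhd V E v" for u v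
  proof -
    have "E v u" "E u v" "u \<in> V" "u \<notin> I"
      using that indep G by (auto simp: nbhd_def graph_def)
    then have "u \<in> B (g u)" using g(1) by (auto simp: B_def)
    moreover have "v \<in> B v" using that assms(3) by (auto simp: B_def)
    ultimately show ?thesis using \<open>E v u\<close> \<open>E u v\<close> by blast
  qed
  then have "\<forall>c d. bipartite_link I (\<lambda>v. g ` nbhd V E v) c d \<longrightarrow> (\<exists>x\<in>B c. \<exists>y\<in>B d. E x y)"
    by (fastforce simp: bipartite_link_def)
  ultimately show ?thesis
    unfolding shallow_minor1_def using assms(2,3) by blast
qed

lemma card_independent_hard_to_dominate_le:
  assumes G: "graph V E" and D: "dominating V E D" and nb: "nabla1B V E < real_of_int nb"
    and I: "I \<subseteq> hard_to_dominate V E V (2 * nb - 1) - D" and indep: "\<forall>x\<in>I. \<forall>y\<in>I. \<not> E x y"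
  shows "card I \<le> card D"
proof -
  obtain g where g: "\<forall>u\<in>V. g u \<in> D \<and> u \<in> cnbhd V E (g u)" "\<forall>d\<in>D. g d = d"
    using dominating_obtains_dominator_map[OF D] .
  define N where "N v = g ` nbhd V E v" for v
  have "D \<subseteq> V" using D by (simp add: dominating_def)
  have IV: "I \<subseteq> V - D" using I by (auto simp: hard_to_dominate_def)
  have fin: "finite I" "finite D"
    using G \<open>D \<subseteq> V\<close> IV by (auto simp: graph_def intro: rev_finite_subset)
  have ND: "N v \<subseteq> D" for v using g(1) by (auto simp: N_def nbhd_def)
  have many: "2 * nb \<le> int (card (N v))" if "v \<in> I" for v
  proof -
    have "N v \<subseteq> V - {v}" using ND \<open>D \<subseteq> V\<close> IV that by blast
    moreover have "nbhd V E v \<subseteq> cnbhd_set V E (N v)"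
    proof
      fix u assume "u \<in> nbhd V E v"
      moreover from this have "u \<in> cnbhd V E (g u)" using g(1) by (simp add: nbhd_def)
      ultimately show "u \<in> cnbhd_set V E (N v)" by (auto simp: cnbhd_set_def N_def)
    qed
    moreover have "v \<in> hard_to_dominate V E V (2 * nb - 1)" using I that by blast
    ultimately have "2 * nb - 1 < int (card (N v))" unfolding hard_to_dominate_def by blast
    then show ?thesis by simp
  qed
  have "2 * nb * int (card I) \<le> (\<Sum>v\<in>I. int (card (N v)))"
    using sum_mono[of I "\<lambda>_. 2 * nb", OF many] by (simp add: mult.commute)
  also have "\<dots> = int (num_edges (bipartite_link I N))"
    using fin ND IV by (subst num_edges_bipartite_link) (auto intro: finite_subset)
  finally have "real_of_int (2 * nb * int (card I)) \<le> real_of_int (int (num_edges (bipartite_link I N)))"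
    by (simp only: of_int_le_iff)
  then have lower: "2 * nb * real (card I) \<le> real (num_edges (bipartite_link I N))"
    by simp
  have minor: "shallow_minor1 V E (I \<union> D) (bipartite_link I N)"
    using shallow_minor1_contract_onto_dominators[OF G \<open>D \<subseteq> V\<close> IV indep g] unfolding N_def .
  have "bipartite (I \<union> D) (bipartite_link I N)"
    using IV ND by (intro bipartite_bipartite_link) auto
  then have "real (num_edges (bipartite_link I N)) \<le> nabla1B V E * real (card (I \<union> D))"
    using num_edges_le_nabla1B[OF G minor] by blast
  also have "\<dots> \<le> nb * (real (card I) + real (card D))"
    using nb card_Un_le[of I D] nabla1B_nonneg[OF G]
    by (intro mult_mono) (auto simp flip: of_nat_add)
  finally have "2 * nb * real (card I) \<le> nb * (real (card I) + real (card D))"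
    using lower by linarith
  moreover have "0 < nb" using nb nabla1B_nonneg[OF G] by linarith
  ultimately show ?thesis by (simp add: algebra_simps)
qed


lemma hall_ratio_nonneg: "graph V E \<Longrightarrow> 0 \<le> hall_ratio V E"
  unfolding hall_ratio_def using finite_hall_ratio_values by (intro Max_ge) auto

lemma alpha_le:
  assumes "finite W" and "\<And>I. independent W F I \<Longrightarrow> card I \<le> k"
  shows "alpha W F \<le> k"
proof -
  have "finite {card I | I. independent W F I}"
    using assms(1) by (auto simp: independent_def intro: finite_subset[of _ "card ` Pow W"])
  moreover have "independent W F {}" by (simp add: independent_def)
  ultimately show ?thesis
    unfolding alpha_def using assms(2) by (intro Max.boundedI) auto
qed

lemma alpha_pos:
  assumes "graph W F" "W \<noteq> {}"
  shows "0 < alpha W F"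
proof -
  obtain x where "x \<in> W" using assms(2) by blast
  then have "independent W F {x}" using assms(1) by (auto simp: independent_def graph_def)
  then have "card {x} \<in> {card I | I. independent W F I}" by blast
  moreover have "finite {card I | I. independent W F I}"
    using assms(1) by (auto simp: independent_def graph_def intro: finite_subset[of _ "card ` Pow W"])
  ultimately have "card {x} \<le> alpha W F"
    unfolding alpha_def by (intro Max_ge) auto
  then show ?thesis by simp
qed

lemma card_le_hall_ratio_mult_alpha:
  assumes "graph V E" "subgraph V E W F"
  shows "real (card W) \<le> hall_ratio V E * real (alpha W F)"
proof (cases "W = {}")
  case True
  then show ?thesis using hall_ratio_nonneg[OF assms(1)] by simp
next
  case False
  have "real (card W) / real (alpha W F) \<le> hall_ratio V E"
    unfolding hall_ratio_def using finite_hall_ratio_values[OF assms(1)] assms False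
    by (intro Max_ge) auto
  moreover have "0 < alpha W F"
    using assms(2) False by (intro alpha_pos) (simp add: subgraph_def)
  ultimately show ?thesis by (simp add: divide_le_eq)
qed

lemma card_le_hall_ratio_mult:
  assumes G: "graph V E" and "W \<subseteq> V"
    and "\<And>I. I \<subseteq> W \<Longrightarrow> \<forall>x\<in>I. \<forall>y\<in>I. \<not> E x y \<Longrightarrow> card I \<le> k"
  shows "real (card W) \<le> hall_ratio V E * real k"
proof -
  define F where "F x y \<longleftrightarrow> E x y \<and> x \<in> W \<and> y \<in> W" for x y
  have "finite W" using G \<open>W \<subseteq> V\<close> by (auto simp: graph_def intro: rev_finite_subset)
  have "subgraph V E W F"
    using G \<open>W \<subseteq> V\<close> \<open>finite W\<close> by (auto simp: subgraph_def graph_def F_def)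
  moreover have "alpha W F \<le> k"
  proof (rule alpha_le[OF \<open>finite W\<close>])
    fix I assume "independent W F I"
    then show "card I \<le> k" by (intro assms(3)) (auto simp: independent_def F_def)
  qed
  ultimately show ?thesis
    using card_le_hall_ratio_mult_alpha[OF G] hall_ratio_nonneg[OF G]
    by (meson mult_left_mono of_nat_le_iff order_trans)
qed

theorem lemma4:
  fixes V :: "'a set" and E :: "'a \<Rightarrow> 'a \<Rightarrow> bool" and D :: "'a set" and nb :: int
  assumes "graph V E"
    and "min_dominating V E D"
    and "real_of_int nb > nabla1B V E"
  shows "{v \<in> V. \<forall>A. A \<subseteq> V - {v} \<and> nbhd V E v \<subseteq> cnbhd_set V E A \<longrightarrow> int (card A) > 2 * nb - 1}
           \<subseteq> {v \<in> V. \<forall>A. A \<subseteq> D - {v} \<and> nbhd V E v \<subseteq> cnbhd_set V E A \<longrightarrow> int (card A) > 2 * nb - 1}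
       \<and> real (card ({v \<in> V. \<forall>A. A \<subseteq> V - {v} \<and> nbhd V E v \<subseteq> cnbhd_set V E A \<longrightarrow> int (card A) > 2 * nb - 1} - D))
           \<le> hall_ratio V E * real (card D)"
proof -
  let ?D1 = "hard_to_dominate V E V (2 * nb - 1)"
  have D: "dominating V E D" using assms(2) by (simp add: min_dominating_def)
  then have "?D1 \<subseteq> hard_to_dominate V E D (2 * nb - 1)"
    by (intro hard_to_dominate_antimono) (simp add: dominating_def)
  moreover have "real (card (?D1 - D)) \<le> hall_ratio V E * real (card D)"
  proof (rule card_le_hall_ratio_mult[OF assms(1)])
    show "?D1 - D \<subseteq> V" by (auto simp: hard_to_dominate_def)
    show "card I \<le> card D" if "I \<subseteq> ?D1 - D" "\<forall>x\<in>I. \<forall>y\<in>I. \<not> E x y" for I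
      using card_independent_hard_to_dominate_le[OF assms(1) D assms(3) that] .
  qed
  ultimately show ?thesis unfolding hard_to_dominate_def by blast
qed

end
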